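(* Let $N\ge4$, $M\ge1$, $\mathcal I_N=\{(i,j):i,j\in\{1,\dots,N\},i\ne j\}$, and for each $(i,j)\in\mathcal I_N$ let $Y_{ij}\in\{0,\dots,M\}$ and $X_{ij}\in\mathbb R^k$. Suppose that, conditional on $\mathbf X=(X_{ij})$ and fixed effects $\mathbf F=((\alpha_i,\gamma_i))_{i=1}^N$, the $Y_{ij}$ are independent across dyads with \[ P(Y_{ij}=m\mid X_{ij},F_i,F_j)=\begin{cases}1-\Lambda(X_{ij}'\beta_0+\alpha_i+\gamma_j-\lambda_{10}), & m=0,\\ \Lambda(X_{ij}'\beta_0+\alpha_i+\gamma_j-\lambda_{m0})-\Lambda(X_{ij}'\beta_0+\alpha_i+\gamma_j-\lambda_{m+1,0}), & 1\le m\le M-1,\\ \Lambda(X_{ij}'\beta_0+\alpha_i+\gamma_j-\lambda_{M0}), & m=M,\end{cases} \] where $\Lambda(z)=e^z/(1+e^z)$, $\beta_0\in\mathbb R^k$, and $\lambda_{10}\le\lambda_{20}\le\dots\le\lambda_{M0}$ are common thresholds. Let $D_{ij}(m)=\mathbf 1\{Y_{ij}\ge m\}$. For a tetrad $\sigma=(i_1,i_2,j_1,j_2)$ of four distinct nodes and a cutoff vector $\mathbf m=(m_{11},m_{12},m_{21},m_{22})\in\{1,\dots,M\}^4$ define \[ Z_\sigma(\mathbf m)=\tfrac12\Big((D_{i_1j_1}(m_{11})-D_{i_1j_2}(m_{12}))-(D_{i_2j_1}(m_{21})-D_{i_2j_2}(m_{22}))\Big), \] $X_\sigma=(X_{i_1j_1},X_{i_1j_2},X_{i_2j_1},X_{i_2j_2})$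 and $r_\sigma=(X_{i_1j_1}-X_{i_1j_2})-(X_{i_2j_1}-X_{i_2j_2})$. Then \[ P\big(Z_\sigma(\mathbf m)=1\mid Z_\sigma(\mathbf m)\in\{-1,+1\},X_\sigma\big)=\Lambda\big(r_\sigma'\beta_0-\lambda_0(\mathbf m)\big), \] where $\lambda_0(\mathbf m)=(\lambda_{m_{11}0}-\lambda_{m_{12}0})-(\lambda_{m_{21}0}-\lambda_{m_{22}0})$.
   Context: $\alpha_i$ is a sender fixed effect and $\gamma_j$ a receiver fixed effect, both constant across outcome categories. *)

theory Defs
  imports "HOL-Analysis.Analysis" "HOL-Probability.Probability"
begin

definition logistic :: "real \<Rightarrow> real" where
  "logistic z = exp z / (1 + exp z)"

definition dyads :: "nat \<Rightarrow> (nat \<times> nat) set" where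
  "dyads N = {(i, j). i \<in> {1..N} \<and> j \<in> {1..N} \<and> i \<noteq> j}"

definition Dind :: "(nat \<times> nat \<Rightarrow> nat) \<Rightarrow> nat \<Rightarrow> nat \<Rightarrow> nat \<Rightarrow> real" where
  "Dind y i j m = (if y (i, j) \<ge> m then 1 else 0)"

definition Ztet :: "(nat \<times> nat \<Rightarrow> nat) \<Rightarrow> nat \<Rightarrow> nat \<Rightarrow> nat \<Rightarrow> nat
    \<Rightarrow> nat \<Rightarrow> nat \<Rightarrow> nat \<Rightarrow> nat \<Rightarrow> real" where
  "Ztet y i1 i2 j1 j2 m11 m12 m21 m22 =
     ((Dind y i1 j1 m11 - Dind y i1 j2 m12) - (Dind y i2 j1 m21 - Dind y i2 j2 m22)) / 2"

end

theory Submission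
  imports Defs
begin

(* Because the ordered-logit probabilities telescope, D_ij(m) is a Bernoulli variable with success
   probability Lambda(s_ij - lambda_m), where s_ij = X_ij' beta0 + alpha_i + gamma_j.  The events
   Z = 1 and Z = -1 are exactly the indicator patterns (1,0,0,1) and (0,1,1,0) on the four dyads of
   the tetrad, so by independence their probabilities are products.  Since
   Lambda(t) = e^t (1 - Lambda(t)), the first product is e^r times the second, with
   r = (s_i1j1 - lambda_m11) - (s_i1j2 - lambda_m12) - (s_i2j1 - lambda_m21) + (s_i2j2 - lambda_m22);
   in r the fixed effects cancel, and u / (u + e^(-r) u) = Lambda(r). *)

lemma measure_Pi_pmf_cylinder:
  assumes "finite A" "J \<subseteq> A"
  shows "measure_pmf.prob (Pi_pmf A dflt p) {y. \<forall>x\<in>J. y x \<in> B x}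
           = (\<Prod>x\<in>J. measure_pmf.prob (p x) (B x))"
proof -
  define B' where "B' x = (if x \<in> J then B x else UNIV)" for x
  have "{y. \<forall>x\<in>J. y x \<in> B x} = Pi A B'"
    using assms(2) by (auto simp: B'_def Pi_def)
  moreover have "(\<Prod>x\<in>A. measure_pmf.prob (p x) (B' x)) = (\<Prod>x\<in>J. measure_pmf.prob (p x) (B x))"
    using assms by (intro prod.mono_neutral_cong_right) (auto simp: B'_def)
  ultimately show ?thesis
    by (simp add: measure_Pi_pmf_Pi[OF assms(1)])
qed

lemma measure_Pi_pmf_four_coords:
  assumes "finite A" "{a, b, c, d} \<subseteq> A" "distinct [a, b, c, d]"
  shows "measure_pmf.prob (Pi_pmf A dflt p) {y. y a \<in> S1 \<and> y b \<in> S2 \<and> y c \<in> S3 \<and> y d \<in> S4}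
     = measure_pmf.prob (p a) S1 * measure_pmf.prob (p b) S2
       * measure_pmf.prob (p c) S3 * measure_pmf.prob (p d) S4"
proof -
  define B where "B x = (if x = a then S1 else if x = b then S2 else if x = c then S3 else S4)" for x
  have ne: "a \<noteq> b" "a \<noteq> c" "a \<noteq> d" "b \<noteq> c" "b \<noteq> d" "c \<noteq> d"
    using assms(3) by auto
  have "{y. y a \<in> S1 \<and> y b \<in> S2 \<and> y c \<in> S3 \<and> y d \<in> S4} = {y. \<forall>x\<in>{a, b, c, d}. y x \<in> B x}"
    using ne by (auto simp: B_def)
  then show ?thesis
    using measure_Pi_pmf_cylinder[OF assms(1,2), of dflt p B] ne by (simp add: B_def mult.assoc)
qed

lemma measure_pmf_atLeast_telescoping:
  fixes q :: "nat pmf" and f :: "nat \<Rightarrow> real"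
  assumes supp: "set_pmf q \<subseteq> {..M}"
    and step: "\<And>k. 1 \<le> k \<Longrightarrow> k < M \<Longrightarrow> pmf q k = f k - f (Suc k)"
    and top: "pmf q M = f M"
    and m: "1 \<le> m" "m \<le> M"
  shows "measure_pmf.prob q {m..} = f m"
proof -
  have "{m..} \<inter> set_pmf q = {m..M} \<inter> set_pmf q"
    using supp by auto
  then have "measure_pmf.prob q {m..} = measure_pmf.prob q {m..M}"
    by (metis measure_Int_set_pmf)
  also have "\<dots> = (\<Sum>k=m..<M. pmf q k) + pmf q M"
    using m by (simp add: measure_measure_pmf_finite sum.last_plus)
  also have "(\<Sum>k=m..<M. pmf q k) = (\<Sum>k=m..<M. f k - f (Suc k))"
    using m step by (intro sum.cong) auto
  also have "\<dots> = f m - f M"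
    using sum_Suc_diff'[OF m(2), of "\<lambda>k. - f k"] by simp
  finally show ?thesis using top by simp
qed

lemma measure_pmf_lessThan_eq_compl_atLeast:
  fixes q :: "'a::linorder pmf"
  shows "measure_pmf.prob q {..<m} = 1 - measure_pmf.prob q {m..}"
proof -
  have "{..<m} = space (measure_pmf q) - {m..}" by auto
  then show ?thesis using measure_pmf.prob_compl[of "{m..}" q] by simp
qed

lemma logistic_pos: "0 < logistic z"
  by (simp add: logistic_def add_pos_pos)

lemma logistic_less_1: "logistic z < 1"
  by (simp add: logistic_def add_pos_pos)

lemma logistic_eq_exp_mult_compl: "logistic z = exp z * (1 - logistic z)"
proof -
  have "1 + exp z \<noteq> 0" using exp_gt_zero[of z] by linarith
  then show ?thesis by (simp add: logistic_def field_simps)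
qed

lemma divide_add_eq_logistic:
  assumes "0 < v" "u = exp t * v"
  shows "u / (u + v) = logistic t"
proof -
  have "u / (u + v) = exp t * v / ((exp t + 1) * v)"
    using assms(2) by (simp add: algebra_simps)
  then show ?thesis
    using assms(1) by (simp add: logistic_def add.commute)
qed

lemma logistic_tetrad_odds:
  fixes a b c d :: real
  defines "u \<equiv> logistic a * (1 - logistic b) * (1 - logistic c) * logistic d"
    and "v \<equiv> (1 - logistic a) * logistic b * logistic c * (1 - logistic d)"
  shows "u / (u + v) = logistic (a - b - c + d)"
proof (rule divide_add_eq_logistic)
  show "0 < v"
    unfolding v_def by (simp add: logistic_pos logistic_less_1)
  have "u = exp a * exp d * (1 - logistic a) * (1 - logistic b) * (1 - logistic c) * (1 - logistic d)"
    unfolding u_def by (subst (1 2) logistic_eq_exp_mult_compl) simp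
  also have "\<dots> = exp (a - b - c + d) * v"
    unfolding v_def by (subst (1 2) logistic_eq_exp_mult_compl) (simp add: exp_add exp_diff field_simps)
  finally show "u = exp (a - b - c + d) * v" .
qed

lemma Ztet_eq_1_iff:
  "Ztet y i1 i2 j1 j2 m11 m12 m21 m22 = 1 \<longleftrightarrow>
     m11 \<le> y (i1, j1) \<and> y (i1, j2) < m12 \<and> y (i2, j1) < m21 \<and> m22 \<le> y (i2, j2)"
  by (auto simp: Ztet_def Dind_def)

lemma Ztet_eq_minus_1_iff:
  "Ztet y i1 i2 j1 j2 m11 m12 m21 m22 = -1 \<longleftrightarrow>
     y (i1, j1) < m11 \<and> m12 \<le> y (i1, j2) \<and> m21 \<le> y (i2, j1) \<and> y (i2, j2) < m22"
  by (auto simp: Ztet_def Dind_def)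

lemma cond_prob_pmf_eq_1_given_sign:
  fixes Z :: "'a \<Rightarrow> real"
  shows "cond_prob (measure_pmf P) (\<lambda>y. Z y = 1) (\<lambda>y. Z y \<in> {-1, 1})
     = measure_pmf.prob P {y. Z y = 1} / (measure_pmf.prob P {y. Z y = 1} + measure_pmf.prob P {y. Z y = -1})"
proof -
  have "{y. Z y = 1 \<and> Z y \<in> {-1, 1}} = {y. Z y = 1}" by auto
  moreover have "{y. Z y \<in> {-1, 1}} = {y. Z y = 1} \<union> {y. Z y = -1}" by auto
  moreover have "{y. Z y = 1} \<inter> {y. Z y = -1} = {}" by auto
  ultimately show ?thesis
    by (simp add: cond_prob_def measure_pmf.finite_measure_Union)
qed
theorem theorem3:
  fixes N M :: nat
    and X :: "nat \<times> nat \<Rightarrow> 'a::euclidean_space"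
    and \<beta>0 :: 'a
    and \<alpha> \<gamma> :: "nat \<Rightarrow> real"
    and lam :: "nat \<Rightarrow> real"
    and p :: "nat \<times> nat \<Rightarrow> nat pmf"
    and i1 i2 j1 j2 m11 m12 m21 m22 :: nat
  assumes "N \<ge> 4" and "M \<ge> 1"
    and lam_mono: "\<And>m m'. 1 \<le> m \<Longrightarrow> m \<le> m' \<Longrightarrow> m' \<le> M \<Longrightarrow> lam m \<le> lam m'"
    and supp: "\<And>i j. (i, j) \<in> dyads N \<Longrightarrow> set_pmf (p (i, j)) \<subseteq> {0..M}"
    and p0: "\<And>i j. (i, j) \<in> dyads N \<Longrightarrow>
       pmf (p (i, j)) 0 = 1 - logistic (X (i, j) \<bullet> \<beta>0 + \<alpha> i + \<gamma> j - lam 1)"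
    and pm: "\<And>i j m. (i, j) \<in> dyads N \<Longrightarrow> 1 \<le> m \<Longrightarrow> m \<le> M - 1 \<Longrightarrow>
       pmf (p (i, j)) m = logistic (X (i, j) \<bullet> \<beta>0 + \<alpha> i + \<gamma> j - lam m)
                        - logistic (X (i, j) \<bullet> \<beta>0 + \<alpha> i + \<gamma> j - lam (m + 1))"
    and pM: "\<And>i j. (i, j) \<in> dyads N \<Longrightarrow>
       pmf (p (i, j)) M = logistic (X (i, j) \<bullet> \<beta>0 + \<alpha> i + \<gamma> j - lam M)"
    and nodes: "i1 \<in> {1..N}" "i2 \<in> {1..N}" "j1 \<in> {1..N}" "j2 \<in> {1..N}"
    and distinct: "distinct [i1, i2, j1, j2]"
    and cutoffs: "m11 \<in> {1..M}" "m12 \<in> {1..M}" "m21 \<in> {1..M}" "m22 \<in> {1..M}"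
  shows "cond_prob (measure_pmf (Pi_pmf (dyads N) 0 p))
           (\<lambda>y. Ztet y i1 i2 j1 j2 m11 m12 m21 m22 = 1)
           (\<lambda>y. Ztet y i1 i2 j1 j2 m11 m12 m21 m22 \<in> {-1, 1})
         = logistic (((X (i1, j1) - X (i1, j2)) - (X (i2, j1) - X (i2, j2))) \<bullet> \<beta>0
                     - ((lam m11 - lam m12) - (lam m21 - lam m22)))"
proof -
  \<comment> \<open>Monotonicity of the thresholds and N \<ge> 4 only ensure that such a model exists; p is given.\<close>
  define P where "P = Pi_pmf (dyads N) 0 p"
  define s where "s x = X x \<bullet> \<beta>0 + \<alpha> (fst x) + \<gamma> (snd x)" for x
  define a b c d where "a = (i1, j1)" and "b = (i1, j2)" and "c = (i2, j1)" and "d = (i2, j2)"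
  have dyads: "{a, b, c, d} \<subseteq> dyads N" and dist: "distinct [a, b, c, d]"
    using nodes distinct by (auto simp: a_def b_def c_def d_def dyads_def)
  have fin: "finite (dyads N)"
    by (rule finite_subset[of _ "{1..N} \<times> {1..N}"]) (auto simp: dyads_def)
  have upper: "measure_pmf.prob (p x) {m..} = logistic (s x - lam m)"
    if "x \<in> dyads N" "m \<in> {1..M}" for x m
  proof -
    obtain i j where "x = (i, j)" by fastforce
    then show ?thesis
      using that supp[of i j] pm[of i j] pM[of i j]
      by (intro measure_pmf_atLeast_telescoping[where M = M]) (auto simp: s_def)
  qed
  have lower: "measure_pmf.prob (p x) {..<m} = 1 - logistic (s x - lam m)"
    if "x \<in> dyads N" "m \<in> {1..M}" for x m
    using upper[OF that] by (simp add: measure_pmf_lessThan_eq_compl_atLeast)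
  define Z where "Z y = Ztet y i1 i2 j1 j2 m11 m12 m21 m22" for y
  have plus: "measure_pmf.prob P {y. Z y = 1} = logistic (s a - lam m11) * (1 - logistic (s b - lam m12))
      * (1 - logistic (s c - lam m21)) * logistic (s d - lam m22)"
    using measure_Pi_pmf_four_coords[OF fin dyads dist, of 0 p "{m11..}" "{..<m12}" "{..<m21}" "{m22..}"]
      dyads cutoffs
    by (simp add: P_def Z_def Ztet_eq_1_iff a_def b_def c_def d_def upper lower)
  have minus: "measure_pmf.prob P {y. Z y = -1} = (1 - logistic (s a - lam m11)) * logistic (s b - lam m12)
      * logistic (s c - lam m21) * (1 - logistic (s d - lam m22))"
    using measure_Pi_pmf_four_coords[OF fin dyads dist, of 0 p "{..<m11}" "{m12..}" "{m21..}" "{..<m22}"]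
      dyads cutoffs
    by (simp add: P_def Z_def Ztet_eq_minus_1_iff a_def b_def c_def d_def upper lower)
  have index: "((X (i1, j1) - X (i1, j2)) - (X (i2, j1) - X (i2, j2))) \<bullet> \<beta>0
                 - ((lam m11 - lam m12) - (lam m21 - lam m22))
      = (s a - lam m11) - (s b - lam m12) - (s c - lam m21) + (s d - lam m22)"
    by (simp add: s_def a_def b_def c_def d_def inner_diff_left)
  show ?thesis
    unfolding P_def[symmetric] Z_def[symmetric] cond_prob_pmf_eq_1_given_sign plus minus index
    by (rule logistic_tetrad_odds)
qed

end
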